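(* Let $(\mathbf{X}_t)_{t\ge 0}$ be a geometric opinion dynamics (as defined in the context) with $n$ agents in dimension $d$. The following are equivalent: (1) For every starting configuration $\mathbf{X}_0\in(\mathbb{S}^{d-1})^n$, $\Pr_{\mathbf{X}_0}\big(\rho(\mathbf{X}_t,P)\to 0\big)=1$. (2) There exists a constant $c>0$ such that for every starting configuration $\mathbf{X}_0\in(\mathbb{S}^{d-1})^n$, $\Pr_{\mathbf{X}_0}\big(\rho(\mathbf{X}_t,P)\to 0\big)\ge c$.
   Context: Fix integers $n\ge 1$ (number of agents) and $d\ge 1$ (dimension). Let $\mathbb{S}^{d-1}=\{\mathbf{x}\in\mathbb{R}^d:\|\mathbf{x}\|_2=1\}$ and $P_{\mathbb{S}^{d-1}}(\mathbf{x})=\mathbf{x}/\|\mathbf{x}\|_2$ for $\mathbf{x}\neq\mathbf{0}$. A geometric opinion dynamics is the Markov chain $\mathbf{X}_t=(\mathbf{X}_t^{(1)},\ldots,\mathbf{X}_t^{(n)})$ on $(\mathbb{S}^{d-1})^n$ defined by $\mathbf{X}_{t+1}^{(i)}=P_{\mathbb{S}^{d-1}}\big(\mathbf{X}_t^{(i)}+f_i(\mathbf{X}_t^{(1)},\ldots,\mathbf{X}_t^{(n)},\xi_t)\big)$, where $\mathbf{X}_0$ is a given starting configuration, the $\xi_t\in\mathbb{S}^{d-1}$ are drawn i.i.d. over time from a fixed distribution $\mathcal{D}$ independently of everything else, each $f_i:(\mathbb{S}^{d-1})^{n+1}\to\mathbb{R}^d$ is a fixed measurable function, and the unnormalized vector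 $\mathbf{X}_t^{(i)}+f_i(\cdots)$ is assumed to be always nonzero. $\Pr_{\mathbf{X}_0}$ denotes probability for the chain started at $\mathbf{X}_0$. The polarized set is $P=\{(\sigma_1\mathbf{x},\ldots,\sigma_n\mathbf{x}):\mathbf{x}\in\mathbb{S}^{d-1},\ \bm{\sigma}\in\{-1,1\}^n\}$, and $\rho(\mathbf{z},A)=\inf_{\mathbf{y}\in A}\|\mathbf{z}-\mathbf{y}\|_2$ is Euclidean distance in $(\mathbb{R}^d)^n$. *)

theory Defs
  imports "HOL-Probability.Probability"
begin

text \<open>Configurations: n agents (indexed by a finite type 'n) on the unit sphere of
  the Euclidean space 'a (dimension d = DIM('a)).\<close>
definition sph_configs :: "('n \<Rightarrow> 'a::euclidean_space) set" where
  "sph_configs = {x. \<forall>i. x i \<in> sphere 0 1}"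

definition god_step :: "('n \<Rightarrow> ('n \<Rightarrow> 'a::euclidean_space) \<Rightarrow> 'a \<Rightarrow> 'a)
    \<Rightarrow> ('n \<Rightarrow> 'a) \<Rightarrow> 'a \<Rightarrow> ('n \<Rightarrow> 'a)" where
  "god_step f x \<xi> = (\<lambda>i. (x i + f i x \<xi>) /\<^sub>R norm (x i + f i x \<xi>))"

primrec god_traj :: "('n \<Rightarrow> ('n \<Rightarrow> 'a::euclidean_space) \<Rightarrow> 'a \<Rightarrow> 'a)
    \<Rightarrow> ('n \<Rightarrow> 'a) \<Rightarrow> 'a stream \<Rightarrow> nat \<Rightarrow> ('n \<Rightarrow> 'a)" where
  "god_traj f x0 \<omega> 0 = x0"
| "god_traj f x0 \<omega> (Suc t) = god_step f (god_traj f x0 \<omega> t) (\<omega> !! t)"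

definition polarized :: "('n \<Rightarrow> 'a::euclidean_space) set" where
  "polarized = {y. \<exists>x\<in>sphere 0 1. \<exists>\<sigma>::'n \<Rightarrow> real.
       (\<forall>i. \<sigma> i \<in> {-1, 1}) \<and> y = (\<lambda>i. \<sigma> i *\<^sub>R x)}"

definition rho :: "('n::finite \<Rightarrow> 'a::euclidean_space) \<Rightarrow> ('n \<Rightarrow> 'a) set \<Rightarrow> real" where
  "rho z A = (INF y\<in>A. L2_set (\<lambda>i. norm (z i - y i)) UNIV)"

definition polarization_event :: "'a::euclidean_space measure
    \<Rightarrow> ('n::finite \<Rightarrow> ('n \<Rightarrow> 'a) \<Rightarrow> 'a \<Rightarrow> 'a) \<Rightarrow> ('n \<Rightarrow> 'a) \<Rightarrow> 'a stream set" where
  "polarization_event D f x0 =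
     {\<omega> \<in> space (stream_space D). (\<lambda>t. rho (god_traj f x0 \<omega> t) polarized) \<longlonglongrightarrow> 0}"

end

theory Submission
  imports Defs
begin

text \<open>
  The non-trivial direction is a Levy zero-one argument. The event that the chain started
  at x does not polarize is shift invariant: a noise sequence t ## \<omega> lies in it iff \<omega> lies
  in the corresponding event for the chain started at the configuration reached from x
  in one step with noise t. By the Markov property, every event C determined by finitely
  many noise values therefore meets the non-polarization event with probability at most
  (1 - c) P(C). These events form an algebra generating the \<sigma>-algebra of noise sequences,
  so they approximate the non-polarization event itself, whose probability p thus
  satisfies p \<le> (1 - c) p, i.e. p = 0.
\<close>

section \<open>Distance to the polarized set\<close>

lemma rho_triangle_ineq:
  fixes z w :: "'n::finite \<Rightarrow> 'a::euclidean_space"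
  assumes "A \<noteq> {}"
  shows "rho z A \<le> rho w A + L2_set (\<lambda>i. norm (z i - w i)) UNIV"
proof -
  have bdd: "bdd_below ((\<lambda>y. L2_set (\<lambda>i. norm (v i - y i)) UNIV) ` A)" for v :: "'n \<Rightarrow> 'a"
    by (rule bdd_belowI[of _ 0]) (auto simp: L2_set_nonneg)
  have "rho z A - L2_set (\<lambda>i. norm (z i - w i)) UNIV \<le> L2_set (\<lambda>i. norm (w i - y i)) UNIV"
    if "y \<in> A" for y
  proof -
    have "rho z A \<le> L2_set (\<lambda>i. norm (z i - y i)) UNIV"
      unfolding rho_def by (rule cINF_lower[OF bdd that])
    also have "\<dots> \<le> L2_set (\<lambda>i. norm (z i - w i) + norm (w i - y i)) UNIV"
      by (rule L2_set_mono) (use norm_diff_triangle_le[OF order.refl order.refl] in auto)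
    also have "\<dots> \<le> L2_set (\<lambda>i. norm (z i - w i)) UNIV + L2_set (\<lambda>i. norm (w i - y i)) UNIV"
      by (rule L2_set_triangle_ineq)
    finally show ?thesis by simp
  qed
  then have "rho z A - L2_set (\<lambda>i. norm (z i - w i)) UNIV \<le> rho w A"
    unfolding rho_def[of w] using assms by (intro cINF_greatest) auto
  then show ?thesis by simp
qed

lemma continuous_on_rho:
  assumes "(A :: ('n::finite \<Rightarrow> 'a::euclidean_space) set) \<noteq> {}"
  shows "continuous_on UNIV (\<lambda>z. rho z A)"
proof (rule continuous_at_imp_continuous_on, intro ballI)
  fix z :: "'n \<Rightarrow> 'a"
  let ?g = "\<lambda>w. \<Sum>i\<in>UNIV. norm (w i - z i)"
  have "continuous_on UNIV ?g"
    by (intro continuous_intros continuous_on_product_coordinates)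
  then have "isCont ?g z"
    by (simp add: continuous_on_eq_continuous_at)
  then have g_lim: "(?g \<longlongrightarrow> 0) (at z)"
    unfolding isCont_def by simp
  have g_bound: "norm (rho w A - rho z A) \<le> ?g w" for w
  proof -
    have "L2_set (\<lambda>i. norm (w i - z i)) UNIV \<le> ?g w"
      by (rule L2_set_le_sum) simp
    moreover have "L2_set (\<lambda>i. norm (z i - w i)) UNIV = L2_set (\<lambda>i. norm (w i - z i)) UNIV"
      by (simp add: norm_minus_commute)
    ultimately show ?thesis
      using rho_triangle_ineq[OF assms, of w z] rho_triangle_ineq[OF assms, of z w]
      unfolding real_norm_def abs_le_iff by linarith
  qed
  have "((\<lambda>w. rho w A - rho z A) \<longlongrightarrow> 0) (at z)"
    by (rule Lim_null_comparison[OF always_eventually g_lim]) (use g_bound in blast)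
  then show "isCont (\<lambda>z. rho z A) z"
    unfolding isCont_def by (simp add: LIM_zero_iff)
qed

lemma polarized_nonempty: "(polarized :: ('n \<Rightarrow> 'a::euclidean_space) set) \<noteq> {}"
proof -
  obtain b :: 'a where "b \<in> Basis" using nonempty_Basis by blast
  then have "(\<lambda>i::'n. 1 *\<^sub>R b) \<in> polarized"
    unfolding polarized_def by (intro CollectI bexI[of _ b] exI[of _ "\<lambda>_. 1"]) auto
  then show ?thesis by blast
qed

section \<open>Approximation by events determined by finite prefixes\<close>

lemma (in finite_measure) measure_UN_diff_finite_UN_less:
  fixes a :: "nat \<Rightarrow> 'a set"
  assumes "range a \<subseteq> sets M" "e > 0"
  shows "\<exists>N. measure M ((\<Union>i. a i) - (\<Union>i<N. a i)) < e"
proof -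
  have "incseq (\<lambda>N. \<Union>i<N. a i)"
    unfolding incseq_def by (intro allI impI UN_mono) auto
  then have "(\<lambda>N. measure M (\<Union>i<N. a i)) \<longlonglongrightarrow> measure M (\<Union>N. \<Union>i<N. a i)"
    using assms(1) by (intro finite_Lim_measure_incseq) auto
  moreover have "(\<Union>N. \<Union>i<N. a i) = (\<Union>i. a i)"
    by blast
  ultimately have "(\<lambda>N. measure M (\<Union>i<N. a i)) \<longlonglongrightarrow> measure M (\<Union>i. a i)"
    by simp
  then obtain N where "norm (measure M (\<Union>i<N. a i) - measure M (\<Union>i. a i)) < e"
    using LIMSEQ_D \<open>e > 0\<close> by blast
  moreover have "measure M ((\<Union>i. a i) - (\<Union>i<N. a i)) = measure M (\<Union>i. a i) - measure M (\<Union>i<N. a i)"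
    using assms(1) by (intro finite_measure_Diff) auto
  ultimately show ?thesis
    by (metis abs_ge_self abs_minus_commute order.strict_trans1 real_norm_def)
qed

lemma (in finite_measure) approx_UN_by_algebra:
  fixes a :: "nat \<Rightarrow> 'a set"
  assumes alg: "algebra (space M) A" "A \<subseteq> sets M" and a: "range a \<subseteq> sets M"
    and approx: "\<And>i e. e > 0 \<Longrightarrow> \<exists>C\<in>A. measure M (sym_diff (a i) C) < e"
    and "e > 0"
  shows "\<exists>C\<in>A. measure M (sym_diff (\<Union>i. a i) C) < e"
proof -
  interpret A: algebra "space M" A by (rule alg)
  obtain N where N: "measure M ((\<Union>i. a i) - (\<Union>i<N. a i)) < e / 2"
    using measure_UN_diff_finite_UN_less[OF a, of "e / 2"] \<open>e > 0\<close> by auto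
  have "\<forall>i. \<exists>C\<in>A. measure M (sym_diff (a i) C) < e / (2 * Suc N)"
    using approx \<open>e > 0\<close> by simp
  then obtain C where C: "\<And>i. C i \<in> A" "\<And>i. measure M (sym_diff (a i) (C i)) < e / (2 * Suc N)"
    by metis
  have sets: "range a \<subseteq> sets M" "range C \<subseteq> sets M"
    using a C(1) alg(2) by auto
  have "sym_diff (\<Union>i. a i) (\<Union>i<N. C i)
      \<subseteq> ((\<Union>i. a i) - (\<Union>i<N. a i)) \<union> (\<Union>i<N. sym_diff (a i) (C i))"
    by blast
  then have "measure M (sym_diff (\<Union>i. a i) (\<Union>i<N. C i))
      \<le> measure M (((\<Union>i. a i) - (\<Union>i<N. a i)) \<union> (\<Union>i<N. sym_diff (a i) (C i)))"
    using sets by (intro finite_measure_mono) auto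
  also have "\<dots> \<le> measure M ((\<Union>i. a i) - (\<Union>i<N. a i)) + measure M (\<Union>i<N. sym_diff (a i) (C i))"
    using sets by (intro measure_Un_le) auto
  also have "measure M (\<Union>i<N. sym_diff (a i) (C i)) \<le> (\<Sum>i<N. measure M (sym_diff (a i) (C i)))"
    using sets by (intro finite_measure_subadditive_finite) auto
  also have "\<dots> \<le> N * (e / (2 * Suc N))"
    using sum_mono[of "{..<N}", OF less_imp_le[OF C(2)]] by simp
  also have "\<dots> \<le> e / 2"
    using \<open>e > 0\<close> by (simp add: field_simps)
  finally have "measure M (sym_diff (\<Union>i. a i) (\<Union>i<N. C i)) < e"
    using N by linarith
  moreover have "(\<Union>i<N. C i) \<in> A"
    using C(1) by blast
  ultimately show ?thesis
    by blast
qed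

lemma (in finite_measure) approx_by_generating_algebra:
  assumes alg: "algebra (space M) A" and gen: "sets M = sigma_sets (space M) A"
    and "B \<in> sets M" and "e > 0"
  shows "\<exists>C\<in>A. measure M (sym_diff B C) < e"
proof -
  interpret A: algebra "space M" A by (rule alg)
  have A_sets: "A \<subseteq> sets M"
    by (auto simp: gen)
  from \<open>B \<in> sets M\<close> have "B \<in> sigma_sets (space M) A" by (simp add: gen)
  then have "\<forall>e>0. \<exists>C\<in>A. measure M (sym_diff B C) < e"
  proof (induction rule: sigma_sets.induct)
    case (Basic a)
    then show ?case by force
  next
    case Empty
    then show ?case by force
  next
    case (Compl a)
    have "sym_diff (space M - a) (space M - C) = sym_diff a C" if "C \<in> A" for C
      using sigma_sets_into_sp[OF A.space_closed Compl.hyps] A.space_closed that by blast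
    then show ?case
      using Compl.IH by (metis A.compl_sets)
  next
    case (Union a)
    have "range a \<subseteq> sets M"
      using Union.hyps by (auto simp: gen)
    show ?case
    proof (intro allI impI)
      fix e :: real assume "e > 0"
      show "\<exists>C\<in>A. measure M (sym_diff (\<Union>i. a i) C) < e"
        by (rule approx_UN_by_algebra[OF alg A_sets \<open>range a \<subseteq> sets M\<close> _ \<open>e > 0\<close>])
          (use Union.IH in blast)
    qed
  qed
  with \<open>e > 0\<close> show ?thesis by blast
qed

definition determined_by_prefix :: "'a set \<Rightarrow> nat \<Rightarrow> 'a stream set \<Rightarrow> bool" where
  "determined_by_prefix \<Omega> T C \<longleftrightarrow>
     (\<forall>\<omega>\<in>streams \<Omega>. \<forall>\<omega>'\<in>streams \<Omega>. stake T \<omega> = stake T \<omega>' \<longrightarrow> (\<omega> \<in> C \<longleftrightarrow> \<omega>' \<in> C))"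

definition prefix_events :: "'a measure \<Rightarrow> 'a stream set set" where
  "prefix_events M = {C \<in> sets (stream_space M). \<exists>T. determined_by_prefix (space M) T C}"

lemma determined_by_prefix_mono:
  assumes "determined_by_prefix \<Omega> T C" "T \<le> T'"
  shows "determined_by_prefix \<Omega> T' C"
  unfolding determined_by_prefix_def
proof (intro ballI impI)
  fix \<omega> \<omega>' assume "\<omega> \<in> streams \<Omega>" "\<omega>' \<in> streams \<Omega>" "stake T' \<omega> = stake T' \<omega>'"
  moreover have "stake T \<omega> = take T (stake T' \<omega>)" "stake T \<omega>' = take T (stake T' \<omega>')"
    using \<open>T \<le> T'\<close> by (simp_all add: take_stake min_def)
  ultimately show "\<omega> \<in> C \<longleftrightarrow> \<omega>' \<in> C"
    using assms(1) unfolding determined_by_prefix_def by metis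
qed

lemma determined_by_prefix_Un:
  "determined_by_prefix \<Omega> T C \<Longrightarrow> determined_by_prefix \<Omega> T C' \<Longrightarrow> determined_by_prefix \<Omega> T (C \<union> C')"
  unfolding determined_by_prefix_def by (metis Un_iff)

lemma determined_by_prefix_Diff:
  "determined_by_prefix \<Omega> T C \<Longrightarrow> determined_by_prefix \<Omega> T (streams \<Omega> - C)"
  unfolding determined_by_prefix_def by (metis Diff_iff)

lemma determined_by_prefix_snth:
  "determined_by_prefix \<Omega> (Suc i) {\<omega>\<in>streams \<Omega>. \<omega> !! i \<in> A}"
  unfolding determined_by_prefix_def
proof (intro ballI impI)
  fix \<omega> \<omega>' :: "'a stream" assume "stake (Suc i) \<omega> = stake (Suc i) \<omega>'"
  then have "\<omega> !! i = \<omega>' !! i"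
    by (metis lessI stake_nth)
  then show "\<omega> \<in> {\<omega> \<in> streams \<Omega>. \<omega> !! i \<in> A} \<longleftrightarrow> \<omega>' \<in> {\<omega> \<in> streams \<Omega>. \<omega> !! i \<in> A}"
    if "\<omega> \<in> streams \<Omega>" "\<omega>' \<in> streams \<Omega>"
    using that by simp
qed

lemma algebra_prefix_events: "algebra (space (stream_space M)) (prefix_events M)"
  unfolding algebra_iff_Un
proof (intro conjI ballI)
  show "prefix_events M \<subseteq> Pow (space (stream_space M))"
    using sets.sets_into_space by (auto simp: prefix_events_def)
  show "{} \<in> prefix_events M"
    by (simp add: prefix_events_def determined_by_prefix_def)
next
  fix C assume "C \<in> prefix_events M"
  then show "space (stream_space M) - C \<in> prefix_events M"
    by (auto simp: prefix_events_def space_stream_space intro: determined_by_prefix_Diff)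
next
  fix C C' assume "C \<in> prefix_events M" "C' \<in> prefix_events M"
  then obtain T T' where "C \<in> sets (stream_space M)" "C' \<in> sets (stream_space M)"
    "determined_by_prefix (space M) T C" "determined_by_prefix (space M) T' C'"
    by (auto simp: prefix_events_def)
  then show "C \<union> C' \<in> prefix_events M"
    unfolding prefix_events_def
    by (blast intro: determined_by_prefix_Un determined_by_prefix_mono max.cobounded1 max.cobounded2)
qed

lemma sets_stream_space_eq_sigma_prefix_events:
  "sets (stream_space M) = sigma_sets (space (stream_space M)) (prefix_events M)"
proof
  have P_space: "prefix_events M \<subseteq> Pow (space (stream_space M))"
    using sets.sets_into_space by (auto simp: prefix_events_def)
  show "sigma_sets (space (stream_space M)) (prefix_events M) \<subseteq> sets (stream_space M)"
    by (rule sets.sigma_sets_subset) (auto simp: prefix_events_def)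
  have "sets (stream_space M) \<subseteq> sets (sigma (space (stream_space M)) (prefix_events M))"
  proof (rule sets_stream_space_in_sets)
    show "space (sigma (space (stream_space M)) (prefix_events M)) = streams (space M)"
      using P_space by (simp add: space_stream_space)
    fix i
    show "(\<lambda>\<omega>. \<omega> !! i) \<in> measurable (sigma (space (stream_space M)) (prefix_events M)) M"
    proof (rule measurableI)
      show "\<omega> !! i \<in> space M" if "\<omega> \<in> space (sigma (space (stream_space M)) (prefix_events M))" for \<omega>
        using that P_space by (simp add: space_stream_space streams_iff_snth)
      fix A assume "A \<in> sets M"
      then have "{\<omega>\<in>streams (space M). \<omega> !! i \<in> A} \<in> sets (stream_space M)"
        using measurable_sets[OF measurable_snth, of A M i]
        by (simp add: space_stream_space vimage_def Int_def conj_commute)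
      then have "{\<omega>\<in>streams (space M). \<omega> !! i \<in> A} \<in> prefix_events M"
        unfolding prefix_events_def using determined_by_prefix_snth by blast
      then show "(\<lambda>\<omega>. \<omega> !! i) -` A \<inter> space (sigma (space (stream_space M)) (prefix_events M))
          \<in> sets (sigma (space (stream_space M)) (prefix_events M))"
        using P_space by (auto simp: space_stream_space vimage_def Int_def conj_commute)
    qed
  qed
  then show "sets (stream_space M) \<subseteq> sigma_sets (space (stream_space M)) (prefix_events M)"
    using P_space by simp
qed

section \<open>A zero-one law for shift-invariant events\<close>

lemma (in prob_space) stream_space_null_if_prefix_bound:
  assumes B: "B \<in> sets (stream_space M)" and q: "0 \<le> q" "q < 1"
    and bound: "\<And>C. C \<in> prefix_events M \<Longrightarrow>
      measure (stream_space M) (B \<inter> C) \<le> q * measure (stream_space M) C"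
  shows "measure (stream_space M) B = 0"
proof -
  interpret S: prob_space "stream_space M"
    by (rule prob_space_stream_space)
  have "(1 - q) * measure (stream_space M) B \<le> 0 + e" if "e > 0" for e
  proof -
    obtain C where C: "C \<in> prefix_events M" and CB: "measure (stream_space M) (sym_diff B C) < e / 2"
      using S.approx_by_generating_algebra[OF algebra_prefix_events
          sets_stream_space_eq_sigma_prefix_events B, of "e / 2"] \<open>e > 0\<close> by auto
    then have C_sets: "C \<in> sets (stream_space M)"
      by (simp add: prefix_events_def)
    have "measure (stream_space M) B \<le> measure (stream_space M) ((B \<inter> C) \<union> sym_diff B C)"
      using B C_sets by (intro S.finite_measure_mono) auto
    also have "\<dots> \<le> measure (stream_space M) (B \<inter> C) + measure (stream_space M) (sym_diff B C)"
      using B C_sets by (intro measure_Un_le) auto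
    finally have B_le: "measure (stream_space M) B \<le> q * measure (stream_space M) C + e / 2"
      using bound[OF C] CB by linarith
    have "measure (stream_space M) C \<le> measure (stream_space M) (B \<union> sym_diff B C)"
      using B C_sets by (intro S.finite_measure_mono) auto
    also have "\<dots> \<le> measure (stream_space M) B + measure (stream_space M) (sym_diff B C)"
      using B C_sets by (intro measure_Un_le) auto
    finally have "q * measure (stream_space M) C \<le> q * (measure (stream_space M) B + e / 2)"
      using CB q by (intro mult_left_mono) auto
    moreover have "q * (e / 2) \<le> e / 2"
      using q \<open>e > 0\<close> by (simp add: mult_left_le_one_le)
    ultimately show ?thesis
      using B_le by (simp add: algebra_simps)
  qed
  then have "(1 - q) * measure (stream_space M) B \<le> 0"
    by (rule field_le_epsilon)
  then show ?thesis
    using q measure_nonneg[of "stream_space M" B] by (simp add: mult_le_0_iff)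
qed

lemma sets_stream_slice:
  assumes "C \<in> sets (stream_space M)" "t \<in> space M"
  shows "{\<omega>\<in>space (stream_space M). t ## \<omega> \<in> C} \<in> sets (stream_space M)"
proof -
  have "(\<lambda>\<omega>. t ## \<omega>) \<in> measurable (stream_space M) (stream_space M)"
    using assms(2) by measurable
  from measurable_sets[OF this assms(1)] show ?thesis
    by (simp add: vimage_def Int_def conj_commute)
qed

lemma determined_by_prefix_stream_slice:
  assumes "determined_by_prefix (space M) (Suc T) C" "t \<in> space M"
  shows "determined_by_prefix (space M) T {\<omega>\<in>space (stream_space M). t ## \<omega> \<in> C}"
  using assms by (auto simp: determined_by_prefix_def space_stream_space streams_Stream)

lemma (in prob_space) measurable_emeasure_stream_slice:
  assumes [measurable]: "C \<in> sets (stream_space M)"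
  shows "(\<lambda>t. emeasure (stream_space M) {\<omega>\<in>space (stream_space M). t ## \<omega> \<in> C}) \<in> borel_measurable M"
proof -
  interpret S: prob_space "stream_space M"
    by (rule prob_space_stream_space)
  have "(\<lambda>t. \<integral>\<^sup>+\<omega>. indicator C (t ## \<omega>) \<partial>stream_space M) \<in> borel_measurable M"
    by measurable
  moreover have "(\<integral>\<^sup>+\<omega>. indicator C (t ## \<omega>) \<partial>stream_space M)
      = emeasure (stream_space M) {\<omega>\<in>space (stream_space M). t ## \<omega> \<in> C}" if "t \<in> space M" for t
  proof -
    have "(\<integral>\<^sup>+\<omega>. indicator C (t ## \<omega>) \<partial>stream_space M)
        = (\<integral>\<^sup>+\<omega>. indicator {\<omega>\<in>space (stream_space M). t ## \<omega> \<in> C} \<omega> \<partial>stream_space M)"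
      by (rule nn_integral_cong) (simp add: indicator_def)
    then show ?thesis
      using sets_stream_slice[OF assms that] by simp
  qed
  ultimately show ?thesis
    by (metis (no_types, lifting) measurable_cong)
qed

text \<open>
  Markov property: conditioning on the first noise value t replaces E x by E (g x t) and C by
  its slice at t, which is determined by one noise value less.
\<close>

lemma (in prob_space) shift_invariant_events_prefix_bound:
  fixes E :: "'x \<Rightarrow> 'a stream set" and g :: "'x \<Rightarrow> 'a \<Rightarrow> 'x"
  assumes E_sets: "\<And>x. x \<in> X \<Longrightarrow> E x \<in> sets (stream_space M)"
    and g_closed: "\<And>x t. x \<in> X \<Longrightarrow> t \<in> space M \<Longrightarrow> g x t \<in> X"
    and E_shift: "\<And>x t \<omega>. x \<in> X \<Longrightarrow> t \<in> space M \<Longrightarrow> \<omega> \<in> streams (space M) \<Longrightarrow>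
      t ## \<omega> \<in> E x \<longleftrightarrow> \<omega> \<in> E (g x t)"
    and E_bound: "\<And>x. x \<in> X \<Longrightarrow> emeasure (stream_space M) (E x) \<le> q"
  shows "x \<in> X \<Longrightarrow> C \<in> sets (stream_space M) \<Longrightarrow> determined_by_prefix (space M) T C \<Longrightarrow>
    emeasure (stream_space M) (E x \<inter> C) \<le> q * emeasure (stream_space M) C"
proof (induction T arbitrary: x C)
  case 0
  interpret S: prob_space "stream_space M"
    by (rule prob_space_stream_space)
  have "C = {} \<or> C = space (stream_space M)"
    using sets.sets_into_space[OF "0.prems"(2)] "0.prems"(3)
    by (auto simp: determined_by_prefix_def space_stream_space)
  then show ?case
    using E_bound[OF "0.prems"(1)] sets.Int_space_eq2[OF E_sets[OF "0.prems"(1)]]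
    by (auto simp: S.emeasure_space_1)
next
  case (Suc T)
  let ?S = "stream_space M"
  define C' where "C' t = {\<omega>\<in>space ?S. t ## \<omega> \<in> C}" for t
  have slice: "{\<omega>\<in>space ?S. t ## \<omega> \<in> E x \<inter> C} = E (g x t) \<inter> C' t" if "t \<in> space M" for t
    using that E_shift[OF Suc.prems(1) that] sets.sets_into_space[OF E_sets[OF g_closed[OF Suc.prems(1) that]]]
    by (auto simp: C'_def space_stream_space)
  have "emeasure ?S (E x \<inter> C) = (\<integral>\<^sup>+t. emeasure ?S {\<omega>\<in>space ?S. t ## \<omega> \<in> E x \<inter> C} \<partial>M)"
    using E_sets[OF Suc.prems(1)] Suc.prems(2) by (intro emeasure_stream_space) auto
  also have "\<dots> = (\<integral>\<^sup>+t. emeasure ?S (E (g x t) \<inter> C' t) \<partial>M)"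
    by (rule nn_integral_cong) (simp only: slice)
  also have "\<dots> \<le> (\<integral>\<^sup>+t. q * emeasure ?S (C' t) \<partial>M)"
    using Suc.IH g_closed[OF Suc.prems(1)] sets_stream_slice[OF Suc.prems(2)]
      determined_by_prefix_stream_slice[OF Suc.prems(3)]
    by (intro nn_integral_mono) (simp add: C'_def)
  also have "\<dots> = q * (\<integral>\<^sup>+t. emeasure ?S (C' t) \<partial>M)"
    unfolding C'_def using measurable_emeasure_stream_slice[OF Suc.prems(2)] by (rule nn_integral_cmult)
  also have "(\<integral>\<^sup>+t. emeasure ?S (C' t) \<partial>M) = emeasure ?S C"
    unfolding C'_def using Suc.prems(2) by (rule emeasure_stream_space[symmetric])
  finally show ?case .
qed

lemma (in prob_space) shift_invariant_events_null:
  fixes E :: "'x \<Rightarrow> 'a stream set" and g :: "'x \<Rightarrow> 'a \<Rightarrow> 'x"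
  assumes E_sets: "\<And>x. x \<in> X \<Longrightarrow> E x \<in> sets (stream_space M)"
    and g_closed: "\<And>x t. x \<in> X \<Longrightarrow> t \<in> space M \<Longrightarrow> g x t \<in> X"
    and E_shift: "\<And>x t \<omega>. x \<in> X \<Longrightarrow> t \<in> space M \<Longrightarrow> \<omega> \<in> streams (space M) \<Longrightarrow>
      t ## \<omega> \<in> E x \<longleftrightarrow> \<omega> \<in> E (g x t)"
    and E_bound: "\<And>x. x \<in> X \<Longrightarrow> measure (stream_space M) (E x) \<le> q"
    and "q < 1" and "x \<in> X"
  shows "measure (stream_space M) (E x) = 0"
proof -
  interpret S: prob_space "stream_space M"
    by (rule prob_space_stream_space)
  have "0 \<le> q"
    using E_bound[OF \<open>x \<in> X\<close>] measure_nonneg order.trans by blast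
  have "measure (stream_space M) (E x \<inter> C) \<le> q * measure (stream_space M) C"
    if C: "C \<in> prefix_events M" for C
  proof -
    obtain T where "C \<in> sets (stream_space M)" "determined_by_prefix (space M) T C"
      using C unfolding prefix_events_def by blast
    then have "emeasure (stream_space M) (E x \<inter> C) \<le> ennreal q * emeasure (stream_space M) C"
      using shift_invariant_events_prefix_bound[OF E_sets g_closed E_shift _ \<open>x \<in> X\<close>]
        E_bound by (simp add: S.emeasure_eq_measure ennreal_leI)
    then show ?thesis
      using \<open>0 \<le> q\<close> by (simp add: S.emeasure_eq_measure ennreal_mult'[symmetric] ennreal_le_iff)
  qed
  then show ?thesis
    using stream_space_null_if_prefix_bound E_sets \<open>x \<in> X\<close> \<open>0 \<le> q\<close> \<open>q < 1\<close> by blast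
qed

section \<open>Geometric opinion dynamics\<close>

lemma god_traj_Stream_Suc: "god_traj f x (t ## \<omega>) (Suc n) = god_traj f (god_step f x t) \<omega> n"
  by (induction n) simp_all

lemma polarization_event_Stream:
  assumes "t \<in> space D"
  shows "t ## \<omega> \<in> polarization_event D f x \<longleftrightarrow> \<omega> \<in> polarization_event D f (god_step f x t)"
proof -
  have "(\<lambda>n. rho (god_traj f x (t ## \<omega>) n) polarized) \<longlonglongrightarrow> 0 \<longleftrightarrow>
        (\<lambda>n. rho (god_traj f x (t ## \<omega>) (Suc n)) polarized) \<longlonglongrightarrow> 0"
    by (rule filterlim_sequentially_Suc[symmetric])
  then show ?thesis
    using assms by (simp add: polarization_event_def god_traj_Stream_Suc space_stream_space streams_Stream
        del: god_traj.simps)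
qed

lemma god_step_in_sph_configs:
  "(\<And>i. x i + f i x \<xi> \<noteq> 0) \<Longrightarrow> god_step f x \<xi> \<in> sph_configs"
  by (simp add: god_step_def sph_configs_def)

lemma god_traj_in_sph_configs:
  fixes f :: "'n \<Rightarrow> ('n \<Rightarrow> 'a::euclidean_space) \<Rightarrow> 'a \<Rightarrow> 'a"
  assumes nonzero: "\<And>x \<xi> i. x \<in> sph_configs \<Longrightarrow> \<xi> \<in> sphere 0 1 \<Longrightarrow> x i + f i x \<xi> \<noteq> 0"
    and x: "x \<in> sph_configs" and \<omega>: "\<omega> \<in> streams (sphere 0 1)"
  shows "god_traj f x \<omega> t \<in> sph_configs"
proof (induction t)
  case 0
  then show ?case using x by simp
next
  case (Suc t)
  moreover have "\<omega> !! t \<in> sphere 0 1"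
    using \<omega> by (simp add: streams_iff_snth)
  ultimately show ?case
    by (simp add: god_step_in_sph_configs nonzero)
qed

lemma measurable_god_step:
  fixes f :: "'n::finite \<Rightarrow> ('n \<Rightarrow> 'a::euclidean_space) \<Rightarrow> 'a \<Rightarrow> 'a"
  assumes f_meas: "\<And>i. (\<lambda>(x, \<xi>). f i x \<xi>)
                   \<in> borel_measurable (restrict_space borel (sph_configs \<times> sphere 0 1))"
  shows "(\<lambda>(x, \<xi>). god_step f x \<xi>) \<in> borel_measurable (restrict_space borel (sph_configs \<times> sphere 0 1))"
proof (rule measurable_coordinatewise_then_product)
  fix i
  have "continuous_on UNIV (\<lambda>p::('n \<Rightarrow> 'a) \<times> 'a. fst p i)"
    using continuous_on_compose2[OF continuous_on_product_coordinates continuous_on_fst[OF continuous_on_id]]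
    by auto
  then have [measurable]: "(\<lambda>p::('n \<Rightarrow> 'a) \<times> 'a. fst p i)
      \<in> borel_measurable (restrict_space borel (sph_configs \<times> sphere 0 1))"
    by (intro measurable_restrict_space1 borel_measurable_continuous_onI) simp
  have [measurable]: "(\<lambda>p. f i (fst p) (snd p))
      \<in> borel_measurable (restrict_space borel (sph_configs \<times> sphere 0 1))"
    using f_meas[of i] by (simp add: split_beta')
  show "(\<lambda>p. (case p of (x, \<xi>) \<Rightarrow> god_step f x \<xi>) i)
      \<in> borel_measurable (restrict_space borel (sph_configs \<times> sphere 0 1))"
    unfolding god_step_def case_prod_beta by measurable
qed

lemma measurable_god_traj:
  fixes f :: "'n::finite \<Rightarrow> ('n \<Rightarrow> 'a::euclidean_space) \<Rightarrow> 'a \<Rightarrow> 'a"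
  assumes D_space: "space D = sphere 0 1"
    and D_sets: "sets D = sets (restrict_space borel (sphere 0 1))"
    and f_meas: "\<And>i. (\<lambda>(x, \<xi>). f i x \<xi>)
                   \<in> borel_measurable (restrict_space borel (sph_configs \<times> sphere 0 1))"
    and nonzero: "\<And>x \<xi> i. x \<in> sph_configs \<Longrightarrow> \<xi> \<in> sphere 0 1 \<Longrightarrow> x i + f i x \<xi> \<noteq> 0"
    and x0: "x0 \<in> sph_configs"
  shows "(\<lambda>\<omega>. god_traj f x0 \<omega> t) \<in> borel_measurable (stream_space D)"
proof (induction t)
  case 0
  then show ?case by simp
next
  case (Suc t)
  have "(\<lambda>x. x) \<in> borel_measurable D"
    using measurable_cong_sets[OF D_sets refl, of borel]
      measurable_restrict_space1[OF measurable_ident_sets[OF refl]] by auto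
  then have "(\<lambda>\<omega>. \<omega> !! t) \<in> borel_measurable (stream_space D)"
    using measurable_compose[OF measurable_snth] by simp
  then have "(\<lambda>\<omega>. (god_traj f x0 \<omega> t, \<omega> !! t)) \<in> borel_measurable (stream_space D)"
    unfolding borel_prod[symmetric] using Suc by measurable
  moreover have "(\<lambda>\<omega>. (god_traj f x0 \<omega> t, \<omega> !! t)) \<in> space (stream_space D) \<rightarrow> sph_configs \<times> sphere 0 1"
    using god_traj_in_sph_configs[of f, OF nonzero x0]
    by (auto simp: space_stream_space D_space streams_iff_snth)
  ultimately have "(\<lambda>\<omega>. (god_traj f x0 \<omega> t, \<omega> !! t))
      \<in> measurable (stream_space D) (restrict_space borel (sph_configs \<times> sphere 0 1))"
    by (intro measurable_restrict_space2)
  from measurable_compose[OF this measurable_god_step[OF f_meas]] show ?case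
    by simp
qed

lemma sets_polarization_event:
  fixes f :: "'n::finite \<Rightarrow> ('n \<Rightarrow> 'a::euclidean_space) \<Rightarrow> 'a \<Rightarrow> 'a"
  assumes D_space: "space D = sphere 0 1"
    and D_sets: "sets D = sets (restrict_space borel (sphere 0 1))"
    and f_meas: "\<And>i. (\<lambda>(x, \<xi>). f i x \<xi>)
                   \<in> borel_measurable (restrict_space borel (sph_configs \<times> sphere 0 1))"
    and nonzero: "\<And>x \<xi> i. x \<in> sph_configs \<Longrightarrow> \<xi> \<in> sphere 0 1 \<Longrightarrow> x i + f i x \<xi> \<noteq> 0"
    and x0: "x0 \<in> sph_configs"
  shows "polarization_event D f x0 \<in> sets (stream_space D)"
proof -
  have [measurable]: "(\<lambda>\<omega>. rho (god_traj f x0 \<omega> t) polarized) \<in> borel_measurable (stream_space D)" for t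
    using measurable_compose[OF measurable_god_traj[OF assms]
        borel_measurable_continuous_onI[OF continuous_on_rho[OF polarized_nonempty]]] .
  show ?thesis
    unfolding polarization_event_def by measurable
qed

theorem theorem3p1:
  fixes f :: "'n::finite \<Rightarrow> ('n \<Rightarrow> 'a::euclidean_space) \<Rightarrow> 'a \<Rightarrow> 'a"
    and D :: "'a measure"
  assumes D_prob: "prob_space D"
    and D_space: "space D = sphere 0 1"
    and D_sets: "sets D = sets (restrict_space borel (sphere 0 1))"
    and f_meas: "\<And>i. (\<lambda>(x, \<xi>). f i x \<xi>)
                   \<in> borel_measurable (restrict_space borel (sph_configs \<times> sphere 0 1))"
    and nonzero: "\<And>x \<xi> i. x \<in> sph_configs \<Longrightarrow> \<xi> \<in> sphere 0 1 \<Longrightarrow> x i + f i x \<xi> \<noteq> 0"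
  shows "(\<forall>x0\<in>sph_configs. measure (stream_space D) (polarization_event D f x0) = 1)
     \<longleftrightarrow> (\<exists>c>0. \<forall>x0\<in>sph_configs. measure (stream_space D) (polarization_event D f x0) \<ge> c)"
proof
  assume "\<forall>x0\<in>sph_configs. measure (stream_space D) (polarization_event D f x0) = 1"
  then show "\<exists>c>0. \<forall>x0\<in>sph_configs. measure (stream_space D) (polarization_event D f x0) \<ge> c"
    by (intro exI[of _ 1]) auto
next
  assume "\<exists>c>0. \<forall>x0\<in>sph_configs. measure (stream_space D) (polarization_event D f x0) \<ge> c"
  then obtain c where "c > 0"
    and c: "\<And>x. x \<in> sph_configs \<Longrightarrow> c \<le> measure (stream_space D) (polarization_event D f x)"
    by blast
  interpret D: prob_space D by (rule D_prob)
  interpret S: prob_space "stream_space D" by (rule D.prob_space_stream_space)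
  let ?B = "\<lambda>x. space (stream_space D) - polarization_event D f x"
  have E_sets: "polarization_event D f x \<in> sets (stream_space D)" if "x \<in> sph_configs" for x
    using sets_polarization_event[OF D_space D_sets f_meas nonzero that] .
  have "measure (stream_space D) (?B x) = 0" if "x \<in> sph_configs" for x
  proof (rule D.shift_invariant_events_null[where g = "god_step f"])
    show "god_step f x t \<in> sph_configs" if "x \<in> sph_configs" "t \<in> space D" for x t
      using that nonzero D_space by (intro god_step_in_sph_configs) auto
    show "t ## \<omega> \<in> ?B x \<longleftrightarrow> \<omega> \<in> ?B (god_step f x t)"
      if "t \<in> space D" "\<omega> \<in> streams (space D)" for x t \<omega>
      using that polarization_event_Stream[OF that(1)] by (simp add: space_stream_space streams_Stream)
    show "measure (stream_space D) (?B x) \<le> 1 - c" if "x \<in> sph_configs" for x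
      using S.prob_compl[OF E_sets[OF that]] c[OF that] by simp
  qed (use E_sets \<open>c > 0\<close> that in auto)
  then show "\<forall>x0\<in>sph_configs. measure (stream_space D) (polarization_event D f x0) = 1"
    using S.prob_compl E_sets by simp
qed

end
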